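(* Let $m\ge2$, $k\ge2$, $n\ge1$, $\mathcal{A}=(a_{i_1i_2\cdots i_m})\in\mathbb{C}^{[m,n]}$ and $\mathcal{B}=(b_{i_1i_2\cdots i_k})\in\mathbb{C}^{[k,n]}$, and suppose the digraph $\Gamma_{\mathcal{A}\mathcal{B}}$ is weakly connected. For $i\in[n]$ let $c_{i\cdots i}=\sum_{i_2,\ldots,i_m=1}^n a_{ii_2\cdots i_m}b_{i_2i\cdots i}\cdots b_{i_mi\cdots i}$ (the diagonal entries of $\mathcal{A}\mathcal{B}$). Then \[\sigma(\mathcal{A}\mathcal{B})\subseteq\mathbf{B}=\bigcup_{\gamma\in C(\mathcal{A}\mathcal{B})}\Big\{z\in\mathbb{C}:\prod_{i\in\gamma}|z-c_{i\cdots i}|\le\prod_{i\in\gamma}\big(r_i(\mathcal{A})(R(\mathcal{B}))^{m-1}-|c_{i\cdots i}|\big)\Big\}\subseteq\mathbf{G},\] where $\mathbf{G}=\bigcup_{i\in[n]}\{z\in\mathbb{C}:|z-c_{i\cdots i}|\le r_i(\mathcal{A})(R(\mathcal{B}))^{m-1}-|c_{i\cdots i}|\}$.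
   Context: $[n]=\{1,\ldots,n\}$. $\mathbb{C}^{[m,n]}$ denotes the set of order $m$, dimension $n$ complex tensors. For a tensor $\mathcal{T}=(t_{i_1\cdots i_p})$ of order $p$ and dimension $n$: $r_i(\mathcal{T})=\sum_{i_2,\ldots,i_p=1}^n|t_{ii_2\cdots i_p}|$, $R(\mathcal{T})=\max_{i\in[n]}r_i(\mathcal{T})$. General product: $\mathcal{A}\mathcal{B}=(c_{i\alpha_1\cdots\alpha_{m-1}})$ is the order $(m-1)(k-1)+1$, dimension $n$ tensor with $c_{i\alpha_1\cdots\alpha_{m-1}}=\sum_{i_2,\ldots,i_m=1}^n a_{ii_2\cdots i_m}b_{i_2\alpha_1}\cdots b_{i_m\alpha_{m-1}}$, $i\in[n]$, $\alpha_j\in[n]^{k-1}$ (where $b_{j\alpha}$ with $\alpha=(j_2,\ldots,j_k)$ means $b_{jj_2\cdots j_k}$). Eigenvalues of a tensor $\mathcal{T}$ of order $p\ge2$: $\lambda\in\mathbb{C}$ such that there is a nonzero $x\in\mathbb{C}^n$ with $\sum_{i_2,\ldots,i_p=1}^n t_{ii_2\cdots i_p}x_{i_2}\cdots x_{i_p}=\lambda x_i^{p-1}$ for all $i\in[n]$; $\sigma(\mathcal{T})$ is the set of eigenvalues. Digraph: for a tensor $\mathcal{T}=(t_{i_1\cdots i_p})$ of dimension $n$, $\Gamma_{\mathcal{T}}$ has vertex set $[n]$ and arc set $\{(i,j): t_{ii_2\cdots i_p}\neq0 \text{ for some } (i_2,\ldots,i_p)\neq(i,\ldots,i) \text{ with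 } j\in\{i_2,\ldots,i_p\}\}$. A circuit is a sequence of distinct vertices $i_1,\ldots,i_q$ ($q\ge1$) with arcs $(i_1,i_2),\ldots,(i_{q-1},i_q),(i_q,i_1)$ (for $q=1$, a loop $(i_1,i_1)$); $C(\mathcal{T})$ is the set of circuits of $\Gamma_{\mathcal{T}}$, and $i\in\gamma$ means $i$ is a vertex of the circuit $\gamma$. $\Gamma_{\mathcal{T}}$ is called weakly connected if every vertex belongs to some circuit. *)

theory Defs
  imports Complex_Main
begin

text \<open>Conventions: the index set [n] is represented by {0..<n}. A tensor of order p and
dimension n is a function T :: nat list \<Rightarrow> complex; only its values on index lists
of length p with entries < n matter. The entry t_{i_1...i_p} is T [i_1,...,i_p].\<close>

definition tidx :: "nat \<Rightarrow> nat \<Rightarrow> nat list set" where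
  "tidx p n = {xs. length xs = p \<and> (\<forall>x\<in>set xs. x < n)}"

definition rsum :: "(nat list \<Rightarrow> complex) \<Rightarrow> nat \<Rightarrow> nat \<Rightarrow> nat \<Rightarrow> real" where
  "rsum T p n i = (\<Sum>ys\<in>tidx (p - 1) n. cmod (T (i # ys)))"

definition Rmax :: "(nat list \<Rightarrow> complex) \<Rightarrow> nat \<Rightarrow> nat \<Rightarrow> real" where
  "Rmax T p n = Max ((\<lambda>i. rsum T p n i) ` {..<n})"

text \<open>General product of A (order m) and B (order k), dimension n; the result has order
(m-1)(k-1)+1 and entry at i # alpha_1 @ ... @ alpha_{m-1} (each alpha_j of length k-1).\<close>
definition tprod :: "(nat list \<Rightarrow> complex) \<Rightarrow> nat \<Rightarrow> (nat list \<Rightarrow> complex) \<Rightarrow> nat \<Rightarrow> nat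
    \<Rightarrow> nat list \<Rightarrow> complex" where
  "tprod A m B k n xs =
     (\<Sum>is\<in>tidx (m - 1) n. A (hd xs # is) *
        (\<Prod>j<m - 1. B ((is ! j) # take (k - 1) (drop (1 + j * (k - 1)) xs))))"

definition is_eig :: "(nat list \<Rightarrow> complex) \<Rightarrow> nat \<Rightarrow> nat \<Rightarrow> complex \<Rightarrow> bool" where
  "is_eig T p n lam \<longleftrightarrow> (\<exists>x :: nat \<Rightarrow> complex. (\<exists>i<n. x i \<noteq> 0) \<and>
     (\<forall>i<n. (\<Sum>is\<in>tidx (p - 1) n. T (i # is) * (\<Prod>j<p - 1. x (is ! j))) = lam * x i ^ (p - 1)))"

definition spectrum_t :: "(nat list \<Rightarrow> complex) \<Rightarrow> nat \<Rightarrow> nat \<Rightarrow> complex set" where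
  "spectrum_t T p n = {lam. is_eig T p n lam}"

definition arc :: "(nat list \<Rightarrow> complex) \<Rightarrow> nat \<Rightarrow> nat \<Rightarrow> nat \<Rightarrow> nat \<Rightarrow> bool" where
  "arc T p n i j \<longleftrightarrow> i < n \<and> j < n \<and>
     (\<exists>ys\<in>tidx (p - 1) n. T (i # ys) \<noteq> 0 \<and> ys \<noteq> replicate (p - 1) i \<and> j \<in> set ys)"

definition circuit :: "(nat list \<Rightarrow> complex) \<Rightarrow> nat \<Rightarrow> nat \<Rightarrow> nat list \<Rightarrow> bool" where
  "circuit T p n cs \<longleftrightarrow> cs \<noteq> [] \<and> distinct cs \<and> (\<forall>x\<in>set cs. x < n) \<and>
     (\<forall>j<length cs. arc T p n (cs ! j) (cs ! ((j + 1) mod length cs)))"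

definition weakly_connected :: "(nat list \<Rightarrow> complex) \<Rightarrow> nat \<Rightarrow> nat \<Rightarrow> bool" where
  "weakly_connected T p n \<longleftrightarrow> (\<forall>i<n. \<exists>cs. circuit T p n cs \<and> i \<in> set cs)"

end

theory Submission
  imports Defs
begin

text \<open>For an eigenpair (\<lambda>, x), write the i-th eigen-equation as
  (\<lambda> - t_{i..i}) x_i^q = \<Sum>_{\<alpha> off-diagonal} t_{i\<alpha>} x_\<alpha>.
Choosing for every vertex i an out-neighbour s(i) of largest |x|, this gives
  |\<lambda> - t_{i..i}| |x_i|^q \<le> r'_i |x_{s(i)}|^q  with r'_i the off-diagonal row sum.
Following s from a vertex with x_i \<noteq> 0 eventually closes a circuit of \<Gamma>_T on which x does
not vanish (otherwise \<lambda> = t_{i..i} for some i and any circuit through i works), and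
multiplying the inequalities around that circuit cancels the |x|-factors.  For T = AB the
off-diagonal row sums are bounded by r_i(A) R(B)^{m-1} - |c_i| because the row sums of the
product factor into those of A and B; the inclusion of the ovals in the discs is the fact that
a product inequality forces one factor inequality.\<close>

lemma finite_tidx: "finite (tidx p n)"
proof -
  have "tidx p n \<subseteq> {xs. set xs \<subseteq> {..<n} \<and> length xs = p}"
    by (auto simp: tidx_def)
  thus ?thesis using finite_lists_length_eq[of "{..<n}" p] finite_subset by blast
qed

lemma replicate_in_tidx: "i < n \<Longrightarrow> replicate p i \<in> tidx p n"
  by (simp add: tidx_def)

lemma tidx_0: "tidx 0 n = {[]}"
  by (auto simp: tidx_def)

lemma tidx_add: "tidx (a + b) n = (\<lambda>(u, v). u @ v) ` (tidx a n \<times> tidx b n)"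
proof
  show "tidx (a + b) n \<subseteq> (\<lambda>(u, v). u @ v) ` (tidx a n \<times> tidx b n)"
  proof
    fix xs assume "xs \<in> tidx (a + b) n"
    hence "(take a xs, drop a xs) \<in> tidx a n \<times> tidx b n"
      by (auto simp: tidx_def dest: in_set_takeD in_set_dropD)
    thus "xs \<in> (\<lambda>(u, v). u @ v) ` (tidx a n \<times> tidx b n)"
      by (metis (no_types, lifting) append_take_drop_id case_prod_conv image_eqI)
  qed
qed (auto simp: tidx_def)

lemma sum_tidx_add:
  "(\<Sum>\<alpha>\<in>tidx (a + b) n. f \<alpha>) = (\<Sum>u\<in>tidx a n. \<Sum>v\<in>tidx b n. f (u @ v))"
proof -
  have "inj_on (\<lambda>(u, v). u @ v) (tidx a n \<times> tidx b n)"
    by (auto simp: inj_on_def tidx_def)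
  thus ?thesis
    unfolding tidx_add by (simp add: sum.reindex sum.cartesian_product case_prod_beta')
qed

lemma sum_tidx_prod_blocks:
  fixes g :: "nat \<Rightarrow> nat list \<Rightarrow> 'a::comm_semiring_1"
  shows "(\<Sum>\<alpha>\<in>tidx (L * r) n. \<Prod>j<L. g j (take r (drop (j * r) \<alpha>)))
       = (\<Prod>j<L. \<Sum>\<beta>\<in>tidx r n. g j \<beta>)"
proof (induction L arbitrary: g)
  case 0
  then show ?case by (simp add: tidx_0)
next
  case (Suc L)
  have split: "(\<Prod>j<Suc L. g j (take r (drop (j * r) (u @ v))))
      = g 0 u * (\<Prod>j<L. g (Suc j) (take r (drop (j * r) v)))" if "u \<in> tidx r n" for u v
    using that unfolding prod.lessThan_Suc_shift by (simp add: tidx_def)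
  have "(\<Sum>\<alpha>\<in>tidx (Suc L * r) n. \<Prod>j<Suc L. g j (take r (drop (j * r) \<alpha>)))
      = (\<Sum>u\<in>tidx r n. \<Sum>v\<in>tidx (L * r) n. g 0 u * (\<Prod>j<L. g (Suc j) (take r (drop (j * r) v))))"
    by (simp only: mult_Suc sum_tidx_add split cong: sum.cong)
  also have "\<dots> = (\<Sum>u\<in>tidx r n. g 0 u) * (\<Prod>j<L. \<Sum>\<beta>\<in>tidx r n. g (Suc j) \<beta>)"
    by (simp add: sum_product[symmetric] Suc.IH[of "\<lambda>j. g (Suc j)"])
  also have "\<dots> = (\<Prod>j<Suc L. \<Sum>\<beta>\<in>tidx r n. g j \<beta>)"
    by (simp only: prod.lessThan_Suc_shift)
  finally show ?case .
qed

section \<open>Row sums and diagonal of the general product\<close>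

lemma tprod_Cons: "tprod A m B k n (i # \<alpha>) = (\<Sum>is\<in>tidx (m - 1) n. A (i # is) *
    (\<Prod>j<m - 1. B (is ! j # take (k - 1) (drop (j * (k - 1)) \<alpha>))))"
  by (simp add: tprod_def)

lemma rsum_nonneg: "0 \<le> rsum T p n i"
  by (simp add: rsum_def sum_nonneg)

lemma rsum_le_Rmax: "j < n \<Longrightarrow> rsum T p n j \<le> Rmax T p n"
  unfolding Rmax_def by (rule Max_ge) auto

lemma rsum_tprod_le:
  "rsum (tprod A m B k n) ((m - 1) * (k - 1) + 1) n i \<le> rsum A m n i * Rmax B k n ^ (m - 1)"
proof -
  let ?q = "(m - 1) * (k - 1)" and ?R = "Rmax B k n"
  let ?b = "\<lambda>is j \<beta>. cmod (B (is ! j # \<beta>))"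
  have "rsum (tprod A m B k n) (?q + 1) n i
      \<le> (\<Sum>\<alpha>\<in>tidx ?q n. \<Sum>is\<in>tidx (m - 1) n. cmod (A (i # is)) *
           (\<Prod>j<m - 1. ?b is j (take (k - 1) (drop (j * (k - 1)) \<alpha>))))"
    unfolding rsum_def tprod_Cons add_diff_cancel_right'
    by (intro sum_mono order.trans[OF norm_sum]) (simp add: norm_mult prod_norm)
  also have "\<dots> = (\<Sum>is\<in>tidx (m - 1) n. cmod (A (i # is)) *
       (\<Sum>\<alpha>\<in>tidx ?q n. \<Prod>j<m - 1. ?b is j (take (k - 1) (drop (j * (k - 1)) \<alpha>))))"
    by (subst sum.swap) (simp add: sum_distrib_left)
  also have "\<dots> = (\<Sum>is\<in>tidx (m - 1) n. cmod (A (i # is)) * (\<Prod>j<m - 1. rsum B k n (is ! j)))"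
    unfolding sum_tidx_prod_blocks[where g="\<lambda>j \<beta>. cmod (B (_ ! j # \<beta>))"] by (simp add: rsum_def)
  also have "\<dots> \<le> (\<Sum>is\<in>tidx (m - 1) n. cmod (A (i # is)) * ?R ^ (m - 1))"
  proof (intro sum_mono mult_left_mono)
    fix ts assume "ts \<in> tidx (m - 1) n"
    hence "(\<Prod>j<m - 1. rsum B k n (ts ! j)) \<le> (\<Prod>j<m - 1. ?R)"
      by (intro prod_mono) (auto simp: tidx_def rsum_nonneg rsum_le_Rmax)
    thus "(\<Prod>j<m - 1. rsum B k n (ts ! j)) \<le> ?R ^ (m - 1)" by simp
  qed simp
  also have "\<dots> = rsum A m n i * ?R ^ (m - 1)"
    by (simp add: rsum_def sum_distrib_right)
  finally show ?thesis .
qed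

lemma tprod_diagonal:
  "tprod A m B k n (i # replicate ((m - 1) * (k - 1)) i) =
    (\<Sum>is\<in>tidx (m - 1) n. A (i # is) * (\<Prod>j<m - 1. B (is ! j # replicate (k - 1) i)))"
  unfolding tprod_Cons
proof (intro sum.cong refl arg_cong2[where f="(*)"] prod.cong)
  fix ts j assume "j \<in> {..<m - 1}"
  hence "Suc j * (k - 1) \<le> (m - 1) * (k - 1)" by (intro mult_le_mono1) simp
  thus "B (ts ! j # take (k - 1) (drop (j * (k - 1)) (replicate ((m - 1) * (k - 1)) i)))
      = B (ts ! j # replicate (k - 1) i)"
    by (simp add: min_def)
qed

section \<open>Cycles of a self-map\<close>

text \<open>A cycle of s is encoded as a list cs with map s cs = rotate1 cs: s sends every entry to
the next one, and the last entry back to the first.\<close>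

lemma funpow_cycle_exists:
  assumes "finite W" "x \<in> W" "s ` W \<subseteq> W"
  obtains cs where "cs \<noteq> []" "distinct cs" "set cs \<subseteq> W" "map s cs = rotate1 cs"
proof -
  have orbit: "(s ^^ j) x \<in> W" for j
    by (induction j) (use assms in auto)
  have "\<not> inj_on (\<lambda>j. (s ^^ j) x) {..card W}"
  proof
    assume "inj_on (\<lambda>j. (s ^^ j) x) {..card W}"
    hence "card {..card W} \<le> card W"
      using orbit by (intro card_inj_on_le[OF _ _ assms(1)]) auto
    thus False by simp
  qed
  then obtain a b where "a < b" "(s ^^ a) x = (s ^^ b) x"
    unfolding inj_on_def by (metis linorder_neqE_nat)
  define v where "v = (s ^^ a) x"
  have "(s ^^ (b - a)) v = (s ^^ (b - a + a)) x"
    by (simp add: v_def funpow_add)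
  also have "\<dots> = v"
    using \<open>a < b\<close> \<open>(s ^^ a) x = (s ^^ b) x\<close> by (simp add: v_def)
  finally have "(s ^^ (b - a)) v = v" .
  hence ex: "\<exists>d. 0 < d \<and> (s ^^ d) v = v"
    using \<open>a < b\<close> zero_less_diff by blast
  define d where "d = (LEAST d. 0 < d \<and> (s ^^ d) v = v)"
  have d: "0 < d" "(s ^^ d) v = v"
    using LeastI_ex[OF ex] by (simp_all add: d_def)
  have d_least: "(s ^^ e) v \<noteq> v" if "0 < e" "e < d" for e
    using not_less_Least[of e "\<lambda>d. 0 < d \<and> (s ^^ d) v = v"] that by (simp add: d_def)
  define cs where "cs = map (\<lambda>j. (s ^^ j) v) [0..<d]"
  have "inj_on (\<lambda>j. (s ^^ j) v) {0..<d}"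
  proof (rule linorder_inj_onI)
    fix i j assume "i < j" "i \<in> {0..<d}" "j \<in> {0..<d}"
    hence "(s ^^ (d - j + i)) v \<noteq> v" by (intro d_least) auto
    moreover have "(s ^^ (d - j + j)) v = v" using \<open>j \<in> {0..<d}\<close> d(2) by simp
    ultimately show "(s ^^ i) v \<noteq> (s ^^ j) v"
      by (metis funpow_add o_apply)
  qed auto
  hence "distinct cs" by (simp add: cs_def distinct_map)
  moreover have "set cs \<subseteq> W"
    using orbit[of "_ + a"] by (auto simp: cs_def v_def funpow_add)
  moreover have "map s cs = rotate1 cs"
  proof (rule nth_equalityI)
    fix j assume "j < length (map s cs)"
    hence "j < d" by (simp add: cs_def)
    hence "map s cs ! j = (s ^^ Suc j) v"
      by (simp add: cs_def)
    also have "\<dots> = rotate1 cs ! j"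
      using \<open>j < d\<close> d(2) by (cases "Suc j = d") (simp_all add: cs_def nth_rotate1 del: funpow.simps(2))
    finally show "map s cs ! j = rotate1 cs ! j" .
  qed (simp add: cs_def)
  moreover have "cs \<noteq> []" using d(1) by (simp add: cs_def)
  ultimately show thesis using that by blast
qed

lemma prod_le_prod_along_cycle:
  fixes a b y :: "'a \<Rightarrow> real"
  assumes "distinct cs" "map s cs = rotate1 cs"
    and "\<And>i. i \<in> set cs \<Longrightarrow> 0 \<le> a i" "\<And>i. i \<in> set cs \<Longrightarrow> 0 < y i"
    and "\<And>i. i \<in> set cs \<Longrightarrow> a i * y i \<le> b i * y (s i)"
  shows "(\<Prod>i\<in>set cs. a i) \<le> (\<Prod>i\<in>set cs. b i)"
proof -
  have "(\<Prod>i\<in>set cs. y (s i)) = prod_list (map y (rotate1 cs))"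
    using assms(1) by (simp add: prod.distinct_set_conv_list o_def flip: assms(2))
  also have "\<dots> = prod_list (rotate1 (map y cs))"
    by (simp add: rotate1_map)
  also have "\<dots> = (\<Prod>i\<in>set cs. y i)"
    using assms(1) by (cases cs) (simp_all add: prod.distinct_set_conv_list mult.commute)
  finally have y_shift: "(\<Prod>i\<in>set cs. y (s i)) = (\<Prod>i\<in>set cs. y i)" .
  have "(\<Prod>i\<in>set cs. a i) * (\<Prod>i\<in>set cs. y i) \<le> (\<Prod>i\<in>set cs. b i) * (\<Prod>i\<in>set cs. y (s i))"
    using assms(3-5) by (simp add: prod.distrib[symmetric] prod_mono less_imp_le)
  moreover have "0 < (\<Prod>i\<in>set cs. y i)"
    using assms(4) by (simp add: prod_pos)
  ultimately show ?thesis
    unfolding y_shift by simp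
qed

lemma prod_le_prod_imp_factor_le:
  fixes a b :: "'a \<Rightarrow> real"
  assumes "finite S" "S \<noteq> {}" "\<And>i. i \<in> S \<Longrightarrow> 0 \<le> b i"
    and "(\<Prod>i\<in>S. a i) \<le> (\<Prod>i\<in>S. b i)"
  shows "\<exists>i\<in>S. a i \<le> b i"
proof (rule ccontr)
  assume "\<not> (\<exists>i\<in>S. a i \<le> b i)"
  hence less: "\<And>i. i \<in> S \<Longrightarrow> b i < a i" by force
  obtain i where "i \<in> S" using assms(2) by blast
  have "(\<Prod>i\<in>S. b i) < (\<Prod>i\<in>S. a i)"
    using assms(3) less by (intro prod_mono_strict[where f=b and g=a, OF \<open>i \<in> S\<close> less[OF \<open>i \<in> S\<close>] assms(1)])
      (auto intro: less_imp_le le_less_trans)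
  thus False using assms(4) by simp
qed

section \<open>Brualdi-type inclusion for tensors\<close>

lemma rsum_minus_diagonal:
  assumes "i < n"
  shows "rsum T (Suc q) n i - cmod (T (i # replicate q i))
       = (\<Sum>\<alpha>\<in>tidx q n - {replicate q i}. cmod (T (i # \<alpha>)))"
  using sum.remove[OF finite_tidx replicate_in_tidx[OF assms], of "\<lambda>\<alpha>. cmod (T (i # \<alpha>))"]
  by (simp add: rsum_def)

lemma cmod_diagonal_le_rsum:
  "i < n \<Longrightarrow> cmod (T (i # replicate q i)) \<le> rsum T (Suc q) n i"
  using rsum_minus_diagonal[of i n T q] by (metis diff_ge_0_iff_ge norm_ge_zero sum_nonneg)

lemma eigen_row_bound:
  assumes "i < n"
    and eigen: "(\<Sum>\<alpha>\<in>tidx q n. T (i # \<alpha>) * (\<Prod>j<q. x (\<alpha> ! j))) = lam * x i ^ q"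
    and bound: "\<And>j. arc T (Suc q) n i j \<Longrightarrow> cmod (x j) \<le> M"
  shows "cmod (lam - T (i # replicate q i)) * cmod (x i) ^ q
       \<le> (rsum T (Suc q) n i - cmod (T (i # replicate q i))) * M ^ q"
proof -
  let ?D = "tidx q n - {replicate q i}"
  let ?f = "\<lambda>\<alpha>. T (i # \<alpha>) * (\<Prod>j<q. x (\<alpha> ! j))"
  have "(lam - T (i # replicate q i)) * x i ^ q = (\<Sum>\<alpha>\<in>?D. ?f \<alpha>)"
    using sum.remove[OF finite_tidx replicate_in_tidx[OF assms(1)], of ?f] eigen
    by (simp add: algebra_simps)
  hence "cmod (lam - T (i # replicate q i)) * cmod (x i) ^ q = cmod (\<Sum>\<alpha>\<in>?D. ?f \<alpha>)"
    by (metis norm_mult norm_power)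
  also have "\<dots> \<le> (\<Sum>\<alpha>\<in>?D. cmod (T (i # \<alpha>)) * M ^ q)"
  proof (rule order.trans[OF norm_sum sum_mono])
    fix \<alpha> assume \<alpha>: "\<alpha> \<in> ?D"
    show "cmod (?f \<alpha>) \<le> cmod (T (i # \<alpha>)) * M ^ q"
    proof (cases "T (i # \<alpha>) = 0")
      case False
      with \<alpha> assms(1) have "arc T (Suc q) n i (\<alpha> ! j)" if "j < q" for j
        using that by (auto simp: arc_def tidx_def)
      hence "(\<Prod>j<q. cmod (x (\<alpha> ! j))) \<le> (\<Prod>j<q. M)"
        by (intro prod_mono) (simp add: bound)
      thus ?thesis by (simp add: norm_mult prod_norm mult_left_mono)
    qed simp
  qed
  also have "\<dots> = (rsum T (Suc q) n i - cmod (T (i # replicate q i))) * M ^ q"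
    by (simp add: rsum_minus_diagonal[OF assms(1)] sum_distrib_right)
  finally show ?thesis .
qed

lemma weakly_connected_arc:
  assumes "weakly_connected T p n" "i < n"
  obtains j where "arc T p n i j"
proof -
  obtain cs where cs: "circuit T p n cs" "i \<in> set cs"
    using assms unfolding weakly_connected_def by blast
  then obtain j where "j < length cs" "cs ! j = i" by (auto simp: in_set_conv_nth)
  with cs(1) show thesis
    using that unfolding circuit_def by auto
qed

lemma weakly_connected_greatest_successor:
  fixes f :: "nat \<Rightarrow> real"
  assumes "weakly_connected T p n"
  obtains s where "\<And>i. i < n \<Longrightarrow> arc T p n i (s i)"
    and "\<And>i j. i < n \<Longrightarrow> arc T p n i j \<Longrightarrow> f j \<le> f (s i)"
proof -
  have "\<exists>j. arc T p n i j \<and> (\<forall>j'. arc T p n i j' \<longrightarrow> f j' \<le> f j)" if "i < n" for i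
  proof -
    let ?N = "{j. arc T p n i j}"
    have "finite ?N" by (rule finite_subset[of _ "{..<n}"]) (auto simp: arc_def)
    moreover have "?N \<noteq> {}" using weakly_connected_arc[OF assms that] by blast
    ultimately have "Max (f ` ?N) \<in> f ` ?N" by (intro Max_in) auto
    then obtain j where "j \<in> ?N" "f j = Max (f ` ?N)" by auto
    thus ?thesis using \<open>finite ?N\<close> by auto
  qed
  then obtain s where "\<forall>i<n. arc T p n i (s i) \<and> (\<forall>j. arc T p n i j \<longrightarrow> f j \<le> f (s i))"
    by metis
  thus thesis using that by blast
qed

lemma circuit_of_cycle:
  assumes "cs \<noteq> []" "distinct cs" "map s cs = rotate1 cs"
    and "\<And>i. i \<in> set cs \<Longrightarrow> i < n \<and> arc T p n i (s i)"
  shows "circuit T p n cs"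
  unfolding circuit_def
proof (intro conjI allI impI ballI)
  fix j assume "j < length cs"
  moreover have "cs ! ((j + 1) mod length cs) = s (cs ! j)"
    using \<open>j < length cs\<close> arg_cong[OF assms(3), of "\<lambda>xs. xs ! j"] by (simp add: nth_rotate1)
  ultimately show "arc T p n (cs ! j) (cs ! ((j + 1) mod length cs))"
    using assms(4) by simp
qed (use assms in auto)

lemma eigenvalue_in_circuit_oval:
  assumes "weakly_connected T (Suc q) n" "is_eig T (Suc q) n lam" "0 < q"
  shows "\<exists>cs. circuit T (Suc q) n cs \<and>
    (\<Prod>i\<in>set cs. cmod (lam - T (i # replicate q i)))
      \<le> (\<Prod>i\<in>set cs. rsum T (Suc q) n i - cmod (T (i # replicate q i)))"
proof -
  let ?d = "\<lambda>i. T (i # replicate q i)"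
  let ?r = "\<lambda>i. rsum T (Suc q) n i - cmod (?d i)"
  obtain x where nonzero: "\<exists>i<n. x i \<noteq> 0"
    and eigen: "\<And>i. i < n \<Longrightarrow> (\<Sum>\<alpha>\<in>tidx q n. T (i # \<alpha>) * (\<Prod>j<q. x (\<alpha> ! j))) = lam * x i ^ q"
    using assms(2) unfolding is_eig_def by auto
  obtain s where arc_s: "\<And>i. i < n \<Longrightarrow> arc T (Suc q) n i (s i)"
    and greatest_s: "\<And>i j. i < n \<Longrightarrow> arc T (Suc q) n i j \<Longrightarrow> cmod (x j) \<le> cmod (x (s i))"
    using weakly_connected_greatest_successor[OF assms(1), of "\<lambda>j. cmod (x j)"] by blast
  have key: "cmod (lam - ?d i) * cmod (x i) ^ q \<le> ?r i * cmod (x (s i)) ^ q" if "i < n" for i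
    using eigen_row_bound[OF that eigen[OF that] greatest_s[OF that]] .
  show ?thesis
  proof (cases "\<exists>i<n. x i \<noteq> 0 \<and> x (s i) = 0")
    case True
    then obtain i where i: "i < n" "x i \<noteq> 0" "x (s i) = 0" by blast
    have "cmod (lam - ?d i) * cmod (x i) ^ q \<le> 0"
      using key[OF i(1)] i(3) assms(3) by (simp add: zero_power)
    moreover have "0 < cmod (x i) ^ q"
      using i(2) by simp
    ultimately have "lam = ?d i"
      by (simp add: mult_le_0_iff)
    obtain cs where cs: "circuit T (Suc q) n cs" "i \<in> set cs"
      using assms(1) i(1) unfolding weakly_connected_def by blast
    have "(\<Prod>j\<in>set cs. cmod (lam - ?d j)) = 0"
      using cs(2) \<open>lam = ?d i\<close> by (intro prod_zero) auto
    moreover have "0 \<le> (\<Prod>j\<in>set cs. ?r j)"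
      using cs(1) cmod_diagonal_le_rsum by (intro prod_nonneg) (auto simp: circuit_def)
    ultimately show ?thesis using cs(1) by metis
  next
    case False
    define W where "W = {i. i < n \<and> x i \<noteq> 0}"
    have "finite W" "s ` W \<subseteq> W"
      using False arc_s by (auto simp: W_def arc_def)
    moreover obtain i0 where "i0 \<in> W" using nonzero by (auto simp: W_def)
    ultimately obtain cs where cs: "cs \<noteq> []" "distinct cs" "set cs \<subseteq> W" "map s cs = rotate1 cs"
      using funpow_cycle_exists by metis
    have "circuit T (Suc q) n cs"
      using cs arc_s by (intro circuit_of_cycle) (auto simp: W_def)
    moreover have "(\<Prod>i\<in>set cs. cmod (lam - ?d i)) \<le> (\<Prod>i\<in>set cs. ?r i)"
      using key cs(3) by (intro prod_le_prod_along_cycle[OF cs(2,4), where y="\<lambda>i. cmod (x i) ^ q"])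
        (auto simp: W_def)
    ultimately show ?thesis by blast
  qed
qed

lemma spectrum_subset_circuit_ovals:
  assumes "weakly_connected T (Suc q) n" "0 < q"
    and "\<And>i. i < n \<Longrightarrow> T (i # replicate q i) = c i"
    and "\<And>i. i < n \<Longrightarrow> rsum T (Suc q) n i - cmod (c i) \<le> \<rho> i"
  shows "spectrum_t T (Suc q) n \<subseteq> (\<Union>cs\<in>{cs. circuit T (Suc q) n cs}.
           {z. (\<Prod>i\<in>set cs. cmod (z - c i)) \<le> (\<Prod>i\<in>set cs. \<rho> i)})"
proof
  fix lam assume "lam \<in> spectrum_t T (Suc q) n"
  then obtain cs where cs: "circuit T (Suc q) n cs"
    "(\<Prod>i\<in>set cs. cmod (lam - T (i # replicate q i)))
       \<le> (\<Prod>i\<in>set cs. rsum T (Suc q) n i - cmod (T (i # replicate q i)))"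
    using eigenvalue_in_circuit_oval[OF assms(1) _ assms(2)] unfolding spectrum_t_def by auto
  have below_n: "i < n" if "i \<in> set cs" for i
    using cs(1) that by (simp add: circuit_def)
  have "(\<Prod>i\<in>set cs. cmod (lam - c i)) \<le> (\<Prod>i\<in>set cs. rsum T (Suc q) n i - cmod (c i))"
    using cs(2) assms(3) below_n by (simp cong: prod.cong)
  also have "\<dots> \<le> (\<Prod>i\<in>set cs. \<rho> i)"
    using assms(3,4) cmod_diagonal_le_rsum[of _ n T q] below_n
    by (intro prod_mono) force
  finally show "lam \<in> (\<Union>cs\<in>{cs. circuit T (Suc q) n cs}.
      {z. (\<Prod>i\<in>set cs. cmod (z - c i)) \<le> (\<Prod>i\<in>set cs. \<rho> i)})"
    using cs(1) by blast
qed

lemma circuit_ovals_subset_discs: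
  assumes "\<And>i. i < n \<Longrightarrow> 0 \<le> \<rho> i"
  shows "(\<Union>cs\<in>{cs. circuit T p n cs}. {z. (\<Prod>i\<in>set cs. cmod (z - c i)) \<le> (\<Prod>i\<in>set cs. \<rho> i)})
       \<subseteq> (\<Union>i\<in>{..<n}. {z. cmod (z - c i) \<le> \<rho> i})"
  using prod_le_prod_imp_factor_le[of "set _" \<rho>] assms by (fastforce simp: circuit_def)

theorem theorem4p4:
  fixes A B :: "nat list \<Rightarrow> complex" and m k n :: nat
    and c :: "nat \<Rightarrow> complex"
  assumes "m \<ge> 2" and "k \<ge> 2" and "n \<ge> 1"
    and "weakly_connected (tprod A m B k n) ((m - 1) * (k - 1) + 1) n"
    and "\<And>i. c i = (\<Sum>is\<in>tidx (m - 1) n. A (i # is) *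
                (\<Prod>j<m - 1. B ((is ! j) # replicate (k - 1) i)))"
  shows "spectrum_t (tprod A m B k n) ((m - 1) * (k - 1) + 1) n
           \<subseteq> (\<Union>cs\<in>{cs. circuit (tprod A m B k n) ((m - 1) * (k - 1) + 1) n cs}.
                {z. (\<Prod>i\<in>set cs. cmod (z - c i))
                    \<le> (\<Prod>i\<in>set cs. rsum A m n i * Rmax B k n ^ (m - 1) - cmod (c i))})
       \<and> (\<Union>cs\<in>{cs. circuit (tprod A m B k n) ((m - 1) * (k - 1) + 1) n cs}.
                {z. (\<Prod>i\<in>set cs. cmod (z - c i))
                    \<le> (\<Prod>i\<in>set cs. rsum A m n i * Rmax B k n ^ (m - 1) - cmod (c i))})
           \<subseteq> (\<Union>i\<in>{..<n}. {z. cmod (z - c i) \<le> rsum A m n i * Rmax B k n ^ (m - 1) - cmod (c i)})"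
proof -
  define T where "T = tprod A m B k n"
  define q where "q = (m - 1) * (k - 1)"
  define \<rho> where "\<rho> i = rsum A m n i * Rmax B k n ^ (m - 1) - cmod (c i)" for i
  have order: "(m - 1) * (k - 1) + 1 = Suc q"
    by (simp add: q_def)
  have diag: "T (i # replicate q i) = c i" for i
    unfolding T_def q_def tprod_diagonal assms(5) ..
  have radius: "rsum T (Suc q) n i - cmod (c i) \<le> \<rho> i" for i
    using rsum_tprod_le[of A m B k n i] unfolding T_def \<rho>_def order by simp
  have radius_nonneg: "0 \<le> \<rho> i" if "i < n" for i
    using cmod_diagonal_le_rsum[OF that, of T q] radius[of i] by (simp add: diag)
  have connected: "weakly_connected T (Suc q) n"
    using assms(4) unfolding T_def order .
  have "0 < q"
    using assms(1,2) by (simp add: q_def)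
  show ?thesis
    using spectrum_subset_circuit_ovals[OF connected \<open>0 < q\<close> diag radius]
      circuit_ovals_subset_discs[OF radius_nonneg, where T = T and p = "Suc q"]
    unfolding T_def \<rho>_def order by (intro conjI) assumption+
qed

end
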